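(* Consider the model and the LinUCB-d algorithm described in the context, under assumptions (A1) and (A2). Let $\{\Phi_b\}$ be any choice of matrices as in the context, and let $\mathcal{C}_b^{(i)}$ be defined as there. Then for any arms $a,b\in[K]$ with $b\neq a$, any $i\in\{1,\dots,d\}$, and every $t\ge1$, \[ \bar N_t(a,\mathcal{C}_b^{(i)})\le\frac{8\alpha_t^2}{\Delta^2}\,d\log\Big(\frac{d+t}{d}\Big). \]
   Context: Model: $K$ arms $[K]$; each arm $a$ has an unknown parameter $\boldsymbol{\theta}(a)\in\mathbb{R}^d$; context set $\mathcal{C}$ and known feature vectors $\mathbf{x}(a,c)\in\mathbb{R}^d$. At each time $t$ the learner observes $c_t$, pulls $a_t$, observes $y_t=r(a_t,c_t)+\eta_t$ with $r(a,c)=\boldsymbol{\theta}(a)^\intercal\mathbf{x}(a,c)$. $\mathcal{C}_a=\{c: r(a,c)>r(b,c)\ \forall b\neq a\}$, $\mathcal{X}_a=\{\mathbf{x}(a,c):c\in\mathcal{C}_a\}$. (A1) $\|\boldsymbol{\theta}(a)\|_2\le s$, $\|\mathbf{x}(a,c)\|_2\le l$. (A2) There is $\Delta>0$ with $r(a,c)-r(b,c)\ge\Delta$ for all $a$, $b\ne a$, $c\in\mathcal{C}_a$. Algorithm LinUCB-d: $f(t)=1+t\log^2 t$, $\alpha_t=ls+\sqrt{(2+d)\log f(t)}$; $\mathbf{V}_t(a)=l^2\mathbf{I}_d+\sum_{\tau<t:\,a_\tau=a}\mathbf{x}(a,c_\tau)\mathbf{x}(a,c_\tau)^\intercal$, $\mathbf{b}_t(a)=\sum_{\tau<t:\,a_\tau=a}y_\tau\mathbf{x}(a,c_\tau)$,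 $\hat r_t(a)=\mathbf{x}(a,c_t)^\intercal\mathbf{V}_t(a)^{-1}\mathbf{b}_t(a)$, $\hat\sigma_t(a)=\sqrt{\mathbf{x}(a,c_t)^\intercal\mathbf{V}_t(a)^{-1}\mathbf{x}(a,c_t)}$; it pulls $a_t\in\arg\max_a\hat r_t(a)+\alpha_t\hat\sigma_t(a)$. Bad estimates: a time $\tau$ is bad if there is an arm $a'$ with $|\hat r_\tau(a')-r(a',c_\tau)|>\alpha_\tau\hat\sigma_\tau(a')$; $\mathcal{B}_t$ is the set of bad times in $[1,t)$. Groups: for each $b$, $\Phi_b$ is a $d\times d$ matrix with columns $\phi_b^{(1)},\dots,\phi_b^{(d)}\in\mathcal{X}_b$ and $\lambda_{\min}(\Phi_b^\intercal\Phi_b)>0$. $\mathcal{X}_b^{(i)}$ is the set of $\mathbf{x}\in\mathcal{X}_b$ with $\mathbf{x}^\intercal\phi_b^{(i)}/\|\phi_b^{(i)}\|_2<\mathbf{x}^\intercal\phi_b^{(j)}/\|\phi_b^{(j)}\|_2$ for all $j<i$ and $\le$ for all $j>i$; and $\mathcal{C}_b^{(i)}=\{c\in\mathcal{C}_b:\mathbf{x}(b,c)\in\mathcal{X}_b^{(i)}\}$. Counts: $\bar N_t(a,\mathcal{C}_b^{(i)})$ is the number of times $\tau$ with $1\le\tau<t$, $a_\tau=a$, $c_\tau\in\mathcal{C}_b^{(i)}$ and $\tau\notin\mathcal{B}_t$. *)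

theory Defs
  imports "HOL-Analysis.Analysis"
begin

text \<open>Arms are the natural numbers 1..K; times start at 1.\<close>

definition arms :: "nat \<Rightarrow> nat set" where
  "arms K = {1..K}"

definition rew :: "(nat \<Rightarrow> (real,'d::finite) vec) \<Rightarrow> (nat \<Rightarrow> 'c \<Rightarrow> (real,'d) vec) \<Rightarrow> nat \<Rightarrow> 'c \<Rightarrow> real" where
  "rew \<theta> x a c = \<theta> a \<bullet> x a c"

definition best_ctx :: "nat \<Rightarrow> 'c set \<Rightarrow> (nat \<Rightarrow> (real,'d::finite) vec) \<Rightarrow> (nat \<Rightarrow> 'c \<Rightarrow> (real,'d) vec) \<Rightarrow> nat \<Rightarrow> 'c set" where
  "best_ctx K Cs \<theta> x a = {c \<in> Cs. \<forall>b \<in> arms K. b \<noteq> a \<longrightarrow> rew \<theta> x a c > rew \<theta> x b c}"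

definition feat_set :: "nat \<Rightarrow> 'c set \<Rightarrow> (nat \<Rightarrow> (real,'d::finite) vec) \<Rightarrow> (nat \<Rightarrow> 'c \<Rightarrow> (real,'d) vec) \<Rightarrow> nat \<Rightarrow> ((real,'d) vec) set" where
  "feat_set K Cs \<theta> x a = (\<lambda>c. x a c) ` best_ctx K Cs \<theta> x a"

text \<open>Smallest eigenvalue of a symmetric matrix (variational / Rayleigh quotient form).\<close>
definition lambda_min :: "((real,'n::finite) vec,'n) vec \<Rightarrow> real" where
  "lambda_min M = Inf {v \<bullet> (M *v v) | v. norm v = 1}"

definition outer :: "(real,'d::finite) vec \<Rightarrow> ((real,'d) vec,'d) vec" where
  "outer v = (\<chi> i j. v$i * v$j)"

definition pulls :: "(nat \<Rightarrow> nat) \<Rightarrow> nat \<Rightarrow> nat \<Rightarrow> nat set" where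
  "pulls A t a = {\<tau>. 1 \<le> \<tau> \<and> \<tau> < t \<and> A \<tau> = a}"

definition Vmat :: "(nat \<Rightarrow> 'c \<Rightarrow> (real,'d::finite) vec) \<Rightarrow> real \<Rightarrow> (nat \<Rightarrow> nat) \<Rightarrow> (nat \<Rightarrow> 'c) \<Rightarrow> nat \<Rightarrow> nat \<Rightarrow> ((real,'d) vec,'d) vec" where
  "Vmat x l A C t a = (l^2) *\<^sub>R mat 1 + (\<Sum>\<tau> \<in> pulls A t a. outer (x a (C \<tau>)))"

definition bvec :: "(nat \<Rightarrow> 'c \<Rightarrow> (real,'d::finite) vec) \<Rightarrow> (nat \<Rightarrow> nat) \<Rightarrow> (nat \<Rightarrow> 'c) \<Rightarrow> (nat \<Rightarrow> real) \<Rightarrow> nat \<Rightarrow> nat \<Rightarrow> (real,'d) vec" where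
  "bvec x A C y t a = (\<Sum>\<tau> \<in> pulls A t a. y \<tau> *\<^sub>R x a (C \<tau>))"

definition rhat :: "(nat \<Rightarrow> 'c \<Rightarrow> (real,'d::finite) vec) \<Rightarrow> real \<Rightarrow> (nat \<Rightarrow> nat) \<Rightarrow> (nat \<Rightarrow> 'c) \<Rightarrow> (nat \<Rightarrow> real) \<Rightarrow> nat \<Rightarrow> nat \<Rightarrow> real" where
  "rhat x l A C y t a = x a (C t) \<bullet> (matrix_inv (Vmat x l A C t a) *v bvec x A C y t a)"

definition sighat :: "(nat \<Rightarrow> 'c \<Rightarrow> (real,'d::finite) vec) \<Rightarrow> real \<Rightarrow> (nat \<Rightarrow> nat) \<Rightarrow> (nat \<Rightarrow> 'c) \<Rightarrow> nat \<Rightarrow> nat \<Rightarrow> real" where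
  "sighat x l A C t a = sqrt (x a (C t) \<bullet> (matrix_inv (Vmat x l A C t a) *v x a (C t)))"

definition fexp :: "nat \<Rightarrow> real" where
  "fexp t = 1 + real t * (ln (real t))^2"

definition alpha :: "nat \<Rightarrow> real \<Rightarrow> real \<Rightarrow> nat \<Rightarrow> real" where
  "alpha d l s t = l * s + sqrt ((2 + real d) * ln (fexp t))"

definition bad_time :: "nat \<Rightarrow> (nat \<Rightarrow> (real,'d::finite) vec) \<Rightarrow> (nat \<Rightarrow> 'c \<Rightarrow> (real,'d) vec) \<Rightarrow> real \<Rightarrow> real
    \<Rightarrow> (nat \<Rightarrow> nat) \<Rightarrow> (nat \<Rightarrow> 'c) \<Rightarrow> (nat \<Rightarrow> real) \<Rightarrow> nat \<Rightarrow> bool" where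
  "bad_time K \<theta> x l s A C y \<tau> =
     (\<exists>a' \<in> arms K. \<bar>rhat x l A C y \<tau> a' - rew \<theta> x a' (C \<tau>)\<bar>
                     > alpha CARD('d) l s \<tau> * sighat x l A C \<tau> a')"

definition bad_set :: "nat \<Rightarrow> (nat \<Rightarrow> (real,'d::finite) vec) \<Rightarrow> (nat \<Rightarrow> 'c \<Rightarrow> (real,'d) vec) \<Rightarrow> real \<Rightarrow> real
    \<Rightarrow> (nat \<Rightarrow> nat) \<Rightarrow> (nat \<Rightarrow> 'c) \<Rightarrow> (nat \<Rightarrow> real) \<Rightarrow> nat \<Rightarrow> nat set" where
  "bad_set K \<theta> x l s A C y t = {\<tau>. 1 \<le> \<tau> \<and> \<tau> < t \<and> bad_time K \<theta> x l s A C y \<tau>}"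

definition group_feat :: "((real,'d::{finite,linorder}) vec) set \<Rightarrow> ((real,'d) vec,'d) vec \<Rightarrow> 'd \<Rightarrow> ((real,'d) vec) set" where
  "group_feat X \<Phi> i = {v \<in> X.
      (\<forall>j. j < i \<longrightarrow> v \<bullet> column i \<Phi> / norm (column i \<Phi>) < v \<bullet> column j \<Phi> / norm (column j \<Phi>)) \<and>
      (\<forall>j. j > i \<longrightarrow> v \<bullet> column i \<Phi> / norm (column i \<Phi>) \<le> v \<bullet> column j \<Phi> / norm (column j \<Phi>))}"

definition group_ctx :: "nat \<Rightarrow> 'c set \<Rightarrow> (nat \<Rightarrow> (real,'d::{finite,linorder}) vec) \<Rightarrow> (nat \<Rightarrow> 'c \<Rightarrow> (real,'d) vec)
    \<Rightarrow> ((real,'d) vec,'d) vec \<Rightarrow> nat \<Rightarrow> 'd \<Rightarrow> 'c set" where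
  "group_ctx K Cs \<theta> x \<Phi> b i =
     {c \<in> best_ctx K Cs \<theta> x b. x b c \<in> group_feat (feat_set K Cs \<theta> x b) \<Phi> i}"

definition Nbar :: "nat \<Rightarrow> (nat \<Rightarrow> (real,'d::finite) vec) \<Rightarrow> (nat \<Rightarrow> 'c \<Rightarrow> (real,'d) vec) \<Rightarrow> real \<Rightarrow> real
    \<Rightarrow> (nat \<Rightarrow> nat) \<Rightarrow> (nat \<Rightarrow> 'c) \<Rightarrow> (nat \<Rightarrow> real) \<Rightarrow> nat \<Rightarrow> nat \<Rightarrow> 'c set \<Rightarrow> nat" where
  "Nbar K \<theta> x l s A C y t a S =
     card {\<tau>. 1 \<le> \<tau> \<and> \<tau> < t \<and> A \<tau> = a \<and> C \<tau> \<in> S \<and> \<tau> \<notin> bad_set K \<theta> x l s A C y t}"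

end

theory Submission
  imports Defs
begin

(* Let N count the good times tau < t at which arm a was pulled in a context of C_b.
   At such a time the optimism of the index, together with the confidence bounds for a and b,
   gives Delta <= 2 alpha_t sighat_tau(a), i.e. sighat_tau(a)^2 >= Delta^2 / (4 alpha_t^2).
   By the matrix determinant lemma det V_t(a) = l^(2d) prod_tau (1 + sighat_tau(a)^2), while
   Hadamard's inequality and AM-GM give det V_t(a) <= (trace V_t(a) / d)^d <= l^(2d) ((d + t)/d)^d.
   Hence (1 + Delta^2 / (4 alpha_t^2))^N <= ((d + t)/d)^d, and ln (1 + w) >= w/2 for w <= 1
   yields the bound. Hadamard's inequality is proved by symmetric Gaussian elimination, which
   keeps the matrix positive semidefinite, preserves the determinant and can only decrease the
   diagonal entries. *)

section \<open>Rank-one updates of determinants\<close>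

definition dyad :: "real^'n \<Rightarrow> real^'m \<Rightarrow> real^'m^'n" where
  "dyad u z = (\<chi> i j. u$i * z$j)"

lemma outer_eq_dyad: "outer v = dyad v v"
  by (simp add: outer_def dyad_def)

lemma dyad_mult_vec: "dyad u z *v v = (z \<bullet> v) *\<^sub>R u"
  by (simp add: dyad_def matrix_vector_mult_def inner_vec_def vec_eq_iff sum_distrib_left mult_ac)

lemma matrix_mult_dyad: "A ** dyad u z = dyad (A *v u) z"
  by (simp add: dyad_def matrix_matrix_mult_def matrix_vector_mult_def vec_eq_iff
      sum_distrib_right sum_distrib_left mult_ac)

lemma dyad_mult_matrix: "dyad u z ** A = dyad u (transpose A *v z)"
  by (simp add: dyad_def matrix_matrix_mult_def matrix_vector_mult_def transpose_def vec_eq_iff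
      sum_distrib_left algebra_simps)

lemma det_rows_axis_but_one:
  "det (\<chi> i. if i = k then w else axis i 1 :: real^'n^'n) = w$k"
proof -
  have "det (\<chi> i. if i = k then w else axis i 1 :: real^'n^'n)
      = (\<Sum>j\<in>UNIV. det (\<chi> i. if i = k then w$j *s axis j 1 else axis i 1 :: real^'n^'n))"
    by (subst basis_expansion[of w, symmetric]) (rule det_linear_row_sum, simp)
  also have "\<dots> = (\<Sum>j\<in>UNIV. if j = k then w$k else 0)"
  proof (intro sum.cong refl)
    fix j
    have "det (\<chi> i. if i = k then w$j *s axis j 1 else axis i 1 :: real^'n^'n)
        = w$j * det (\<chi> i. if i = k then axis j 1 else axis i 1 :: real^'n^'n)"
      by (rule det_row_mul)
    moreover have "det (\<chi> i. if i = k then axis j 1 else axis i 1 :: real^'n^'n)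
        = (if j = k then 1 else 0)"
    proof (cases "j = k")
      case True
      have "(\<chi> i. if i = k then axis j 1 else axis i 1 :: real^'n^'n) = mat 1"
        using True by (simp add: vec_eq_iff mat_def axis_def)
      then show ?thesis using True by simp
    next
      case False
      then show ?thesis
        by (simp add: det_identical_rows[of k j] row_def)
    qed
    ultimately show "det (\<chi> i. if i = k then w$j *s axis j 1 else axis i 1 :: real^'n^'n)
        = (if j = k then w$k else 0)" by simp
  qed
  finally show ?thesis by simp
qed

lemma det_rows_axis_plus_multiple_but_one:
  fixes u z :: "real^'n"
  assumes "finite S" "k \<notin> S"
  shows "det (\<chi> i. if i = k then z else if i \<in> S then axis i 1 + u$i *s z else axis i 1 :: real^'n^'n)
           = z$k"
  using assms
proof (induction S rule: finite_induct)
  case empty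
  have "(\<chi> i. if i = k then z else if i \<in> {} then axis i 1 + u$i *s z else axis i 1 :: real^'n^'n)
      = (\<chi> i. if i = k then z else axis i 1)"
    by (simp add: vec_eq_iff)
  then show ?case by (simp add: det_rows_axis_but_one)
next
  case (insert j S)
  define R where "R i = (if i = k then z else if i \<in> S then axis i 1 + u$i *s z else axis i 1)" for i
  have "(\<chi> i. if i = k then z else if i \<in> insert j S then axis i 1 + u$i *s z else axis i 1 :: real^'n^'n)
      = (\<chi> i. if i = j then axis i 1 + u$j *s z else R i)"
    using insert.prems by (auto simp: vec_eq_iff R_def)
  moreover have "(\<chi> i. if i = j then axis i 1 else R i) =
      (\<chi> i. if i = k then z else if i \<in> S then axis i 1 + u$i *s z else axis i 1 :: real^'n^'n)"
    using insert by (auto simp: vec_eq_iff R_def)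
  moreover have "det (\<chi> i. if i = j then z else R i :: real^'n^'n) = 0"
    using insert.prems by (intro det_identical_rows[of j k]) (auto simp: row_def R_def)
  ultimately show ?case
    using insert by (simp add: det_row_add det_row_mul)
qed

lemma det_mat1_add_dyad: "det (mat 1 + dyad u z :: real^'n^'n) = 1 + u \<bullet> z"
proof -
  have rows: "det (\<chi> i. if i \<in> S then axis i 1 + u$i *s z else axis i 1 :: real^'n^'n)
          = 1 + (\<Sum>i\<in>S. u$i * z$i)" if "finite S" for S
    using that
  proof (induction S rule: finite_induct)
    case empty
    have "(\<chi> i. axis i 1 :: real^'n^'n) = mat 1" by (simp add: vec_eq_iff mat_def axis_def)
    then show ?case by simp
  next
    case (insert k S)
    have "(\<chi> i. if i \<in> insert k S then axis i 1 + u$i *s z else axis i 1 :: real^'n^'n)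
      = (\<chi> i. if i = k then axis i 1 + u$k *s z else if i \<in> S then axis i 1 + u$i *s z else axis i 1)"
      by (auto simp: vec_eq_iff)
    moreover have "(\<chi> i. if i = k then axis i 1 else if i \<in> S then axis i 1 + u$i *s z else axis i 1)
      = (\<chi> i. if i \<in> S then axis i 1 + u$i *s z else axis i 1 :: real^'n^'n)"
      using insert.hyps by (auto simp: vec_eq_iff)
    ultimately show ?case
      using insert by (simp add: det_row_add det_row_mul det_rows_axis_plus_multiple_but_one)
  qed
  have "mat 1 + dyad u z = (\<chi> i. if i \<in> UNIV then axis i 1 + u$i *s z else axis i 1 :: real^'n^'n)"
    by (simp add: vec_eq_iff mat_def dyad_def axis_def)
  then show ?thesis using rows[of UNIV] by (simp add: inner_vec_def)
qed

lemma matrix_inv_right: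
  assumes "invertible (M::real^'n^'n)"
  shows "M ** matrix_inv M = mat 1"
  using someI_ex[OF assms[unfolded invertible_def]] by (simp add: matrix_inv_def)

lemma det_add_outer:
  fixes V :: "real^'n^'n"
  assumes "invertible V"
  shows "det (V + outer z) = det V * (1 + z \<bullet> (matrix_inv V *v z))"
proof -
  have "V ** dyad (matrix_inv V *v z) z = outer z"
    by (simp add: matrix_mult_dyad matrix_vector_mul_assoc matrix_inv_right[OF assms] outer_eq_dyad)
  then have "V + outer z = V ** (mat 1 + dyad (matrix_inv V *v z) z)"
    by (simp add: matrix_add_ldistrib)
  then show ?thesis
    by (simp add: det_mul det_mat1_add_dyad inner_commute)
qed

section \<open>Hadamard's inequality\<close>

lemma matrix_mult_diff_left: "(A - B) ** C = A ** C - B ** (C :: real^'p^'n)"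
  by (simp add: matrix_matrix_mult_def vec_eq_iff left_diff_distrib sum_subtractf)

lemma matrix_mult_diff_right: "A ** (B - C) = A ** B - A ** (C :: real^'p^'n)"
  by (simp add: matrix_matrix_mult_def vec_eq_iff right_diff_distrib sum_subtractf)

lemma axis_inner_mult_axis: "axis i 1 \<bullet> (G *v axis j 1) = G$i$j"
  by (simp add: inner_axis' matrix_vector_mul_component inner_axis)

definition psd_matrix :: "real^'n^'n \<Rightarrow> bool" where
  "psd_matrix G \<longleftrightarrow> transpose G = G \<and> (\<forall>v. 0 \<le> v \<bullet> (G *v v))"

lemma psd_matrix_symmetric: "psd_matrix G \<Longrightarrow> G$j$i = G$i$j"
  unfolding psd_matrix_def by (metis transpose_def vec_lambda_beta)

lemma psd_matrix_diag_nonneg: "psd_matrix G \<Longrightarrow> 0 \<le> G$i$i"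
  unfolding psd_matrix_def by (metis axis_inner_mult_axis)

lemma psd_matrix_congruence:
  assumes "psd_matrix G"
  shows "psd_matrix (E ** G ** transpose E)"
proof -
  have "v \<bullet> ((E ** G ** transpose E) *v v) = (transpose E *v v) \<bullet> (G *v (transpose E *v v))" for v
    by (simp add: matrix_vector_mul_assoc[symmetric] dot_lmul_matrix[symmetric])
  then show ?thesis
    using assms by (simp add: psd_matrix_def matrix_transpose_mul matrix_mul_assoc)
qed

lemma elimination_entries:
  fixes G :: "real^'n^'n" and c :: "real^'n" and k :: 'n
  assumes sym: "transpose G = G"
  defines "E \<equiv> mat 1 - dyad c (axis k 1)"
  shows "(E ** G ** transpose E)$i$j = G$i$j - c$i * G$k$j - c$j * G$i$k + c$i * c$j * G$k$k"
proof -
  define w where "w = G *v axis k 1"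
  have "transpose E = mat 1 - dyad (axis k 1) c"
    by (simp add: E_def vec_eq_iff transpose_def dyad_def mat_def)
  then have "E ** G ** transpose E = (G - dyad c w) - dyad ((G - dyad c w) *v axis k 1) c"
    using sym by (simp add: E_def w_def matrix_mult_diff_left matrix_mult_diff_right
        matrix_mult_dyad dyad_mult_matrix)
  then have "(E ** G ** transpose E)$i$j = G$i$j - c$i * G$j$k - (G$i$k - c$i * G$k$k) * c$j"
    by (simp add: w_def dyad_def dyad_mult_vec matrix_vector_mult_diff_rdistrib
        matrix_vector_mul_component inner_axis)
  moreover have "G$j$k = G$k$j"
    using sym by (metis transpose_def vec_lambda_beta)
  ultimately show ?thesis by (simp add: algebra_simps)
qed

lemma psd_matrix_zero_diag_row:
  assumes psd: "psd_matrix G" and zero: "G$k$k = 0"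
  shows "G$k$j = 0"
proof (rule ccontr)
  assume ne: "G$k$j \<noteq> 0"
  define t where "t = - (G$j$j + 1) / (2 * G$k$j)"
  define v where "v = t *\<^sub>R axis k 1 + axis j (1::real)"
  have "v \<bullet> (G *v v) = t * t * G$k$k + t * G$k$j + t * G$j$k + G$j$j"
    by (simp add: v_def axis_inner_mult_axis algebra_simps)
  also have "\<dots> = -1"
    using ne zero psd_matrix_symmetric[OF psd, of j k] by (simp add: t_def field_simps)
  finally show False
    using psd unfolding psd_matrix_def by (metis neg_0_le_iff_le not_one_le_zero)
qed

lemma psd_matrix_eliminate_row:
  fixes G :: "real^'n^'n"
  assumes psd: "psd_matrix G"
  obtains H where "psd_matrix H" "det H = det G" "\<forall>i. H$i$i \<le> G$i$i"
    "\<forall>j. j \<noteq> k \<longrightarrow> H$k$j = 0"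
    "\<forall>i. (\<forall>j. j \<noteq> i \<longrightarrow> G$i$j = 0) \<longrightarrow> (\<forall>j. j \<noteq> i \<longrightarrow> H$i$j = 0)"
proof (cases "G$k$k = 0")
  case True
  then show ?thesis
    using that[of G] psd psd_matrix_zero_diag_row[OF psd True] by auto
next
  case False
  define g where "g = G$k$k"
  have g: "g > 0" using psd_matrix_diag_nonneg[OF psd, of k] False by (simp add: g_def)
  have sym: "G$j$i = G$i$j" for i j by (rule psd_matrix_symmetric[OF psd])
  define c :: "real^'n" where "c = (\<chi> i. if i = k then 0 else G$i$k / g)"
  define E where "E = mat 1 - dyad c (axis k 1)"
  define H where "H = E ** G ** transpose E"
  have H: "H$i$j = G$i$j - c$i * G$k$j - c$j * G$i$k + c$i * c$j * g" for i j
    using psd unfolding H_def E_def g_def psd_matrix_def by (simp add: elimination_entries)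
  have "E = mat 1 + dyad (-c) (axis k 1)"
    by (simp add: E_def dyad_def vec_eq_iff)
  then have "det E = 1"
    by (simp add: det_mat1_add_dyad inner_axis c_def)
  then have "det H = det G"
    by (simp add: H_def det_mul)
  moreover have "H$i$i \<le> G$i$i" for i
  proof (cases "i = k")
    case False
    then have "H$i$i = G$i$i - (G$i$k)^2 / g"
      using g by (simp add: H c_def sym[of k i] field_simps power2_eq_square)
    then show ?thesis using g by simp
  qed (simp add: H c_def)
  moreover have Hk: "H$k$j = 0" if "j \<noteq> k" for j
    using that g by (simp add: H c_def g_def sym[of k j])
  moreover have "H$i$j = 0" if "\<forall>j. j \<noteq> i \<longrightarrow> G$i$j = 0" "j \<noteq> i" for i j
  proof (cases "i = k")
    case False
    then show ?thesis using that by (simp add: H c_def)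
  qed (use Hk that in simp)
  moreover have "psd_matrix H"
    unfolding H_def by (rule psd_matrix_congruence[OF psd])
  ultimately show ?thesis
    by (intro that[of H]) auto
qed

lemma det_le_prod_diag:
  fixes G :: "real^'n^'n"
  assumes psd: "psd_matrix G"
  shows "det G \<le> (\<Prod>i\<in>UNIV. G$i$i)"
proof -
  have "\<exists>H. psd_matrix H \<and> det H = det G \<and> (\<forall>i. H$i$i \<le> G$i$i) \<and>
          (\<forall>i\<in>S. \<forall>j. j \<noteq> i \<longrightarrow> H$i$j = 0)" if "finite S" for S
    using that
  proof (induction S rule: finite_induct)
    case empty
    show ?case by (intro exI[of _ G]) (simp add: psd)
  next
    case (insert k S)
    then obtain H where H: "psd_matrix H" "det H = det G" "\<forall>i. H$i$i \<le> G$i$i"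
      "\<forall>i\<in>S. \<forall>j. j \<noteq> i \<longrightarrow> H$i$j = 0" by blast
    obtain H' where H': "psd_matrix H'" "det H' = det H" "\<forall>i. H'$i$i \<le> H$i$i"
      "\<forall>j. j \<noteq> k \<longrightarrow> H'$k$j = 0"
      "\<forall>i. (\<forall>j. j \<noteq> i \<longrightarrow> H$i$j = 0) \<longrightarrow> (\<forall>j. j \<noteq> i \<longrightarrow> H'$i$j = 0)"
      by (rule psd_matrix_eliminate_row[OF H(1)])
    have "\<forall>i. H'$i$i \<le> G$i$i"
      using H(3) H'(3) order_trans by blast
    moreover have "\<forall>i\<in>insert k S. \<forall>j. j \<noteq> i \<longrightarrow> H'$i$j = 0"
      using H(4) H'(4,5) by simp
    ultimately show ?case
      using H(2) H'(1,2) by (intro exI[of _ H']) simp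
  qed
  from this[of UNIV] obtain H where H: "psd_matrix H" "det H = det G" "\<forall>i. H$i$i \<le> G$i$i"
    "\<forall>i j. j \<noteq> i \<longrightarrow> H$i$j = 0" by auto
  have "det H = (\<Prod>i\<in>UNIV. H$i$i)"
    using H(4) by (simp add: det_diagonal)
  also have "\<dots> \<le> (\<Prod>i\<in>UNIV. G$i$i)"
    using H(3) psd_matrix_diag_nonneg[OF H(1)] by (simp add: prod_mono)
  finally show ?thesis using H(2) by simp
qed

lemma prod_le_mean_power:
  fixes a :: "'a \<Rightarrow> real"
  assumes "finite S" "S \<noteq> {}" "\<And>i. i \<in> S \<Longrightarrow> 0 \<le> a i"
  shows "(\<Prod>i\<in>S. a i) \<le> ((\<Sum>i\<in>S. a i) / card S) ^ card S"
proof -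
  let ?P = "\<Prod>i\<in>S. a i" and ?n = "card S"
  have n: "?n > 0" using assms(1,2) by (simp add: card_gt_0_iff)
  have "?P = (?P powr (1 / ?n)) powr ?n"
    using n assms(3) by (simp add: powr_powr prod_nonneg)
  also have "\<dots> \<le> ((\<Sum>i\<in>S. a i) / ?n) powr ?n"
    using arith_geom_mean[OF assms] by (simp add: powr_mono2 sum_divide_distrib)
  also have "\<dots> = ((\<Sum>i\<in>S. a i) / ?n) ^ ?n"
    using n assms(3) by (simp add: powr_realpow' sum_nonneg)
  finally show ?thesis .
qed

lemma det_le_trace_power:
  fixes G :: "real^'n^'n"
  assumes "psd_matrix G"
  shows "det G \<le> (trace G / real CARD('n)) ^ CARD('n)"
  using det_le_prod_diag[OF assms] prod_le_mean_power[of UNIV "\<lambda>i. G$i$i"]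
    psd_matrix_diag_nonneg[OF assms] by (simp add: trace_def)

lemma inner_matrix_inv_nonneg:
  fixes V :: "real^'n^'n"
  assumes "psd_matrix V" "invertible V"
  shows "0 \<le> z \<bullet> (matrix_inv V *v z)"
proof -
  define u where "u = matrix_inv V *v z"
  have "V *v u = z"
    by (simp add: u_def matrix_vector_mul_assoc matrix_inv_right[OF assms(2)])
  then have "z \<bullet> u = u \<bullet> (V *v u)"
    by (simp add: inner_commute)
  then show ?thesis
    using assms(1) by (simp add: u_def psd_matrix_def)
qed

section \<open>The regularised design matrix\<close>

lemma matrix_vector_mult_sum_left: "sum f S *v v = (\<Sum>i\<in>S. f i *v (v::real^'n))"
  for f :: "'a \<Rightarrow> real^'n^'m"
  by (induction S rule: infinite_finite_induct) (auto simp: matrix_vector_mult_add_rdistrib)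

lemma pulls_Suc:
  "pulls A (Suc t) a = (if 1 \<le> t \<and> A t = a then insert t (pulls A t a) else pulls A t a)"
  by (auto simp: pulls_def less_Suc_eq)

lemma finite_pulls [simp]: "finite (pulls A t a)"
  by (rule finite_subset[of _ "{..<t}"]) (auto simp: pulls_def)

lemma card_pulls_le: "card (pulls A t a) \<le> t"
proof -
  have "card (pulls A t a) \<le> card {1..<t}"
    by (rule card_mono) (auto simp: pulls_def)
  then show ?thesis by simp
qed

lemma Vmat_mult_vec:
  "Vmat x l A C t a *v v = l\<^sup>2 *\<^sub>R v + (\<Sum>\<tau>\<in>pulls A t a. (x a (C \<tau>) \<bullet> v) *\<^sub>R x a (C \<tau>))"
  by (simp add: Vmat_def matrix_vector_mult_add_rdistrib matrix_vector_mult_sum_left outer_eq_dyad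
      dyad_mult_vec scaleR_matrix_vector_assoc[symmetric])

lemma Vmat_quadratic_form:
  "v \<bullet> (Vmat x l A C t a *v v) = l\<^sup>2 * (v \<bullet> v) + (\<Sum>\<tau>\<in>pulls A t a. (x a (C \<tau>) \<bullet> v)\<^sup>2)"
  by (simp add: Vmat_mult_vec inner_add_right inner_sum_right power2_eq_square inner_commute)

lemma psd_matrix_Vmat: "psd_matrix (Vmat x l A C t a)"
proof -
  have "transpose (Vmat x l A C t a) = Vmat x l A C t a"
    by (simp add: vec_eq_iff transpose_def Vmat_def outer_def mat_def sum_component mult.commute)
  then show ?thesis
    by (simp add: psd_matrix_def Vmat_quadratic_form sum_nonneg)
qed

lemma invertible_Vmat:
  assumes "l \<noteq> 0"
  shows "invertible (Vmat x l A C t a)"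
  unfolding invertible_left_inverse matrix_left_invertible_ker
proof (intro allI impI)
  fix v assume "Vmat x l A C t a *v v = 0"
  then have "l\<^sup>2 * (v \<bullet> v) + (\<Sum>\<tau>\<in>pulls A t a. (x a (C \<tau>) \<bullet> v)\<^sup>2) = 0"
    by (metis Vmat_quadratic_form inner_zero_right)
  moreover have "0 \<le> (\<Sum>\<tau>\<in>pulls A t a. (x a (C \<tau>) \<bullet> v)\<^sup>2)"
    by (simp add: sum_nonneg)
  ultimately show "v = 0"
    using assms by (smt (verit) inner_ge_zero inner_eq_zero_iff mult_pos_pos zero_less_power2)
qed

lemma trace_Vmat:
  "trace (Vmat x l A C t a) = real CARD('d) * l\<^sup>2 + (\<Sum>\<tau>\<in>pulls A t a. (norm (x a (C \<tau>)))\<^sup>2)"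
  for x :: "nat \<Rightarrow> 'c \<Rightarrow> real^'d"
  by (simp add: trace_def Vmat_def outer_def mat_def sum_component sum.distrib sum.swap[of _ UNIV]
      power2_norm_eq_inner inner_vec_def)

lemma Vmat_Suc:
  "Vmat x l A C (Suc t) a =
     (if 1 \<le> t \<and> A t = a then Vmat x l A C t a + outer (x a (C t)) else Vmat x l A C t a)"
proof -
  have "t \<notin> pulls A t a" by (simp add: pulls_def)
  then show ?thesis by (simp add: Vmat_def pulls_Suc add.assoc)
qed

lemma sighat_sq:
  assumes "l \<noteq> 0"
  shows "(sighat x l A C t a)\<^sup>2 = x a (C t) \<bullet> (matrix_inv (Vmat x l A C t a) *v x a (C t))"
  using inner_matrix_inv_nonneg[OF psd_matrix_Vmat invertible_Vmat[OF assms]]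
  by (simp add: sighat_def)

lemma det_Vmat:
  fixes x :: "nat \<Rightarrow> 'c \<Rightarrow> real^'d"
  assumes "l \<noteq> 0"
  shows "det (Vmat x l A C t a) = (l\<^sup>2) ^ CARD('d) * (\<Prod>\<tau>\<in>pulls A t a. 1 + (sighat x l A C \<tau> a)\<^sup>2)"
proof (induction t)
  case 0
  have "Vmat x l A C 0 a = mat (l\<^sup>2)"
    by (simp add: Vmat_def pulls_def vec_eq_iff mat_def)
  then show ?case
    by (simp add: det_diagonal mat_def pulls_def)
next
  case (Suc t)
  show ?case
  proof (cases "1 \<le> t \<and> A t = a")
    case True
    then have "pulls A (Suc t) a = insert t (pulls A t a)"
      by (simp add: pulls_Suc)
    moreover have "t \<notin> pulls A t a"
      by (simp add: pulls_def)
    ultimately show ?thesis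
      using True Suc.IH
      by (simp add: Vmat_Suc det_add_outer invertible_Vmat[OF assms] sighat_sq[OF assms])
  next
    case False
    then have "pulls A (Suc t) a = pulls A t a" "Vmat x l A C (Suc t) a = Vmat x l A C t a"
      by (simp_all only: pulls_Suc Vmat_Suc if_not_P[OF False] if_False)
    then show ?thesis
      using Suc.IH by simp
  qed
qed

lemma det_Vmat_le:
  fixes x :: "nat \<Rightarrow> 'c \<Rightarrow> real^'d"
  assumes "\<forall>\<tau>\<in>pulls A t a. norm (x a (C \<tau>)) \<le> l"
  shows "det (Vmat x l A C t a)
           \<le> (l\<^sup>2) ^ CARD('d)
              * ((real CARD('d) + real (card (pulls A t a))) / real CARD('d)) ^ CARD('d)"
proof -
  let ?r = "(real CARD('d) + real (card (pulls A t a))) / real CARD('d)"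
  have "(\<Sum>\<tau>\<in>pulls A t a. (norm (x a (C \<tau>)))\<^sup>2) \<le> real (card (pulls A t a)) * l\<^sup>2"
    using sum_bounded_above[of "pulls A t a" "\<lambda>\<tau>. (norm (x a (C \<tau>)))\<^sup>2" "l\<^sup>2"] assms
    by (simp add: power_mono)
  then have "trace (Vmat x l A C t a) \<le> l\<^sup>2 * (real CARD('d) + real (card (pulls A t a)))"
    unfolding trace_Vmat by (simp add: algebra_simps)
  then have "trace (Vmat x l A C t a) / real CARD('d) \<le> l\<^sup>2 * ?r"
    by (simp add: divide_right_mono)
  moreover have "0 \<le> trace (Vmat x l A C t a)"
    by (simp add: trace_def sum_nonneg psd_matrix_diag_nonneg[OF psd_matrix_Vmat])
  ultimately have "det (Vmat x l A C t a) \<le> (l\<^sup>2 * ?r) ^ CARD('d)"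
    using det_le_trace_power[OF psd_matrix_Vmat]
    by (meson order_trans power_mono divide_nonneg_nonneg of_nat_0_le_iff)
  then show ?thesis
    by (simp only: power_mult_distrib)
qed

lemma prod_one_plus_sighat_sq_le:
  fixes x :: "nat \<Rightarrow> 'c \<Rightarrow> real^'d"
  assumes "l \<noteq> 0" "\<forall>\<tau>\<in>pulls A t a. norm (x a (C \<tau>)) \<le> l"
  shows "(\<Prod>\<tau>\<in>pulls A t a. 1 + (sighat x l A C \<tau> a)\<^sup>2)
           \<le> ((real CARD('d) + real (card (pulls A t a))) / real CARD('d)) ^ CARD('d)"
proof -
  have "(l\<^sup>2) ^ CARD('d) * (\<Prod>\<tau>\<in>pulls A t a. 1 + (sighat x l A C \<tau> a)\<^sup>2)
          \<le> (l\<^sup>2) ^ CARD('d)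
              * ((real CARD('d) + real (card (pulls A t a))) / real CARD('d)) ^ CARD('d)"
    using det_Vmat_le[of A t a x C l] assms by (simp add: det_Vmat)
  then show ?thesis
    using assms(1) by (simp add: mult_le_cancel_left_pos)
qed

lemma ln_one_plus_ge_half:
  fixes w :: real
  assumes "0 \<le> w" "w \<le> 1"
  shows "w / 2 \<le> ln (1 + w)"
proof -
  have "- ln (1 + w) \<le> inverse (1 + w) - 1"
    using assms ln_le_minus_one[of "inverse (1 + w)"] by (simp add: ln_inverse)
  moreover have "inverse (1 + w) - 1 = - (w / (1 + w))"
    using assms by (simp add: field_simps)
  ultimately have "w / (1 + w) \<le> ln (1 + w)"
    by linarith
  moreover have "w / 2 \<le> w / (1 + w)"
    using assms by (intro divide_left_mono) auto
  ultimately show ?thesis by linarith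
qed

lemma exponent_le_of_power_le:
  fixes w B :: real
  assumes "0 < w" "w \<le> 1" "0 < B" "(1 + w) ^ n \<le> B ^ d"
  shows "n \<le> 2 / w * d * ln B"
proof -
  have "n * (w / 2) \<le> n * ln (1 + w)"
    using assms by (intro mult_left_mono ln_one_plus_ge_half) auto
  also have "\<dots> = ln ((1 + w) ^ n)"
    using assms by (simp add: ln_realpow)
  also have "\<dots> \<le> ln (B ^ d)"
    using assms by (simp add: ln_mono)
  also have "\<dots> = d * ln B"
    using assms by (simp add: ln_realpow)
  finally show ?thesis
    using assms by (simp add: field_simps)
qed

lemma card_le_of_sighat_sq_ge:
  fixes x :: "nat \<Rightarrow> 'c \<Rightarrow> real^'d"
  assumes "l \<noteq> 0" "\<forall>\<tau>\<in>pulls A t a. norm (x a (C \<tau>)) \<le> l" "T \<subseteq> pulls A t a"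
    and "0 < w" "w \<le> 1" "\<forall>\<tau>\<in>T. w \<le> (sighat x l A C \<tau> a)\<^sup>2"
  shows "card T \<le> 2 / w * real CARD('d) * ln ((real CARD('d) + real t) / real CARD('d))"
proof -
  have "(1 + w) ^ card T = (\<Prod>\<tau>\<in>T. 1 + w)"
    by simp
  also have "\<dots> \<le> (\<Prod>\<tau>\<in>T. 1 + (sighat x l A C \<tau> a)\<^sup>2)"
    using assms(4,6) by (intro prod_mono) auto
  also have "\<dots> \<le> (\<Prod>\<tau>\<in>pulls A t a. 1 + (sighat x l A C \<tau> a)\<^sup>2)"
    using assms(3) by (intro prod_mono2) auto
  also have "\<dots> \<le> ((real CARD('d) + real (card (pulls A t a))) / real CARD('d)) ^ CARD('d)"
    using assms(1,2) by (rule prod_one_plus_sighat_sq_le)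
  also have "\<dots> \<le> ((real CARD('d) + real t) / real CARD('d)) ^ CARD('d)"
    using card_pulls_le[of A t a] by (intro power_mono divide_right_mono) auto
  finally have "(1 + w) ^ card T \<le> ((real CARD('d) + real t) / real CARD('d)) ^ CARD('d)" .
  moreover have "0 < (real CARD('d) + real t) / real CARD('d)"
    by (simp add: add_pos_nonneg)
  ultimately show ?thesis
    using assms(4,5) by (intro exponent_le_of_power_le) auto
qed

lemma card_le_of_width_ge:
  fixes x :: "nat \<Rightarrow> 'c \<Rightarrow> real^'d"
  assumes "l \<noteq> 0" "\<forall>\<tau>\<in>pulls A t a. norm (x a (C \<tau>)) \<le> l" "T \<subseteq> pulls A t a"
    and "0 < \<Delta>" "\<Delta> \<le> 2 * \<alpha>" "\<forall>\<tau>\<in>T. \<Delta> \<le> 2 * \<alpha> * sighat x l A C \<tau> a"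
  shows "card T
           \<le> 8 * \<alpha>\<^sup>2 / \<Delta>\<^sup>2 * real CARD('d) * ln ((real CARD('d) + real t) / real CARD('d))"
proof -
  define w where "w = \<Delta>\<^sup>2 / (2 * \<alpha>)\<^sup>2"
  have "\<Delta>\<^sup>2 \<le> (2 * \<alpha>)\<^sup>2"
    using assms(4,5) by (intro power_mono) auto
  moreover have "0 < \<alpha>"
    using assms(4,5) by linarith
  ultimately have "0 < w" "w \<le> 1"
    using assms(4) by (simp_all add: w_def field_simps)
  moreover have "w \<le> (sighat x l A C \<tau> a)\<^sup>2" if "\<tau> \<in> T" for \<tau>
  proof -
    have "\<Delta>\<^sup>2 \<le> (2 * \<alpha> * sighat x l A C \<tau> a)\<^sup>2"
      using assms(4,6) that by (intro power_mono) auto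
    then show ?thesis
      using assms(4,5) by (simp add: w_def power_mult_distrib field_simps)
  qed
  ultimately have "card T \<le> 2 / w * real CARD('d) * ln ((real CARD('d) + real t) / real CARD('d))"
    using assms(1-3) by (intro card_le_of_sighat_sq_ge[where x = x and C = C]) auto
  also have "2 / w = 8 * \<alpha>\<^sup>2 / \<Delta>\<^sup>2"
    using assms(4,5) by (simp add: w_def power_mult_distrib)
  finally show ?thesis .
qed

section \<open>Confidence widths at good times\<close>

lemma fexp_mono:
  assumes "1 \<le> \<tau>" "\<tau> \<le> t"
  shows "fexp \<tau> \<le> fexp t"
proof -
  have "(ln \<tau>)\<^sup>2 \<le> (ln t)\<^sup>2"
    using assms by (intro power_mono) auto
  then show ?thesis
    using assms by (simp add: fexp_def mult_mono)
qed

lemma alpha_mono: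
  assumes "1 \<le> \<tau>" "\<tau> \<le> t"
  shows "alpha d l s \<tau> \<le> alpha d l s t"
proof -
  have "ln (fexp \<tau>) \<le> ln (fexp t)"
    using fexp_mono[OF assms] by (simp add: fexp_def add_pos_nonneg)
  then show ?thesis
    by (simp add: alpha_def mult_left_mono)
qed

lemma alpha_ge: "l * s \<le> alpha d l s t"
  by (simp add: alpha_def fexp_def)

lemma sighat_nonneg: "l \<noteq> 0 \<Longrightarrow> 0 \<le> sighat x l A C t a"
  by (simp add: sighat_def inner_matrix_inv_nonneg psd_matrix_Vmat invertible_Vmat)

lemma rew_gap_le:
  assumes "norm (\<theta> a) \<le> s" "norm (\<theta> b) \<le> s" "norm (x a c) \<le> l" "norm (x b c) \<le> l"
  shows "rew \<theta> x b c - rew \<theta> x a c \<le> 2 * (l * s)"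
proof -
  have "\<bar>rew \<theta> x a' c\<bar> \<le> l * s" if "norm (\<theta> a') \<le> s" "norm (x a' c) \<le> l" for a'
    using Cauchy_Schwarz_ineq2[of "\<theta> a'" "x a' c"] that
    by (simp add: rew_def) (metis mult.commute mult_mono norm_ge_zero order_trans)
  then show ?thesis
    using assms by (smt (verit))
qed

lemma gap_le_width_at_good_time:
  fixes x :: "nat \<Rightarrow> 'c \<Rightarrow> real^'d"
  assumes "l \<noteq> 0" "a \<in> arms K" "b \<in> arms K" "\<tau> \<in> pulls A t a"
    and good: "\<not> bad_time K \<theta> x l s A C y \<tau>"
    and choice: "\<forall>a' \<in> arms K. rhat x l A C y \<tau> a' + alpha CARD('d) l s \<tau> * sighat x l A C \<tau> a'
                   \<le> rhat x l A C y \<tau> (A \<tau>) + alpha CARD('d) l s \<tau> * sighat x l A C \<tau> (A \<tau>)"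
    and gap: "\<Delta> \<le> rew \<theta> x b (C \<tau>) - rew \<theta> x a (C \<tau>)"
  shows "\<Delta> \<le> 2 * alpha CARD('d) l s t * sighat x l A C \<tau> a"
proof -
  have \<tau>: "1 \<le> \<tau>" "\<tau> \<le> t" "A \<tau> = a"
    using assms(4) by (auto simp: pulls_def)
  have conf: "\<bar>rhat x l A C y \<tau> a' - rew \<theta> x a' (C \<tau>)\<bar>
                \<le> alpha CARD('d) l s \<tau> * sighat x l A C \<tau> a'"
    if "a' \<in> arms K" for a'
    using good that by (auto simp: bad_time_def not_less)
  \<comment> \<open>optimism: the true reward of b is below its index, which is below the index of a\<close>
  have "\<Delta> \<le> 2 * alpha CARD('d) l s \<tau> * sighat x l A C \<tau> a"
    using conf[OF assms(2)] conf[OF assms(3)] choice[rule_format, OF assms(3)] gap \<tau>(3)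
    by (simp add: abs_le_iff)
  also have "\<dots> \<le> 2 * alpha CARD('d) l s t * sighat x l A C \<tau> a"
    using alpha_mono[OF \<tau>(1,2)] sighat_nonneg[OF assms(1)] by (intro mult_right_mono) auto
  finally show ?thesis .
qed

theorem lemma9:
  fixes K :: nat and Cs :: "'c set"
    and \<theta> :: "nat \<Rightarrow> (real,'d::{finite,linorder}) vec" and x :: "nat \<Rightarrow> 'c \<Rightarrow> (real,'d) vec"
    and l s \<Delta> :: real
    and C :: "nat \<Rightarrow> 'c" and A :: "nat \<Rightarrow> nat" and \<eta> :: "nat \<Rightarrow> real" and y :: "nat \<Rightarrow> real"
    and \<Phi> :: "nat \<Rightarrow> ((real,'d) vec,'d) vec"
    and a b :: nat and i :: 'd and t :: nat
  assumes A1_theta: "\<forall>a' \<in> arms K. norm (\<theta> a') \<le> s"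
    and A1_x: "\<forall>a' \<in> arms K. \<forall>c \<in> Cs. norm (x a' c) \<le> l"
    and A2_pos: "\<Delta> > 0"
    and A2: "\<forall>a' \<in> arms K. \<forall>b' \<in> arms K. b' \<noteq> a' \<longrightarrow>
               (\<forall>c \<in> best_ctx K Cs \<theta> x a'. rew \<theta> x a' c - rew \<theta> x b' c \<ge> \<Delta>)"
    and ctx: "\<forall>\<tau>\<ge>1. C \<tau> \<in> Cs"
    and obs: "\<forall>\<tau>\<ge>1. y \<tau> = rew \<theta> x (A \<tau>) (C \<tau>) + \<eta> \<tau>"
    and alg: "\<forall>\<tau>\<ge>1. A \<tau> \<in> arms K \<and>
               (\<forall>a' \<in> arms K.
                  rhat x l A C y \<tau> a' + alpha CARD('d) l s \<tau> * sighat x l A C \<tau> a'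
                  \<le> rhat x l A C y \<tau> (A \<tau>) + alpha CARD('d) l s \<tau> * sighat x l A C \<tau> (A \<tau>))"
    and Phi_cols: "\<forall>b' \<in> arms K. \<forall>j. column j (\<Phi> b') \<in> feat_set K Cs \<theta> x b'"
    and Phi_rank: "\<forall>b' \<in> arms K. lambda_min (transpose (\<Phi> b') ** \<Phi> b') > 0"
    and ab: "a \<in> arms K" "b \<in> arms K" "b \<noteq> a"
    and t: "t \<ge> 1"
  shows "real (Nbar K \<theta> x l s A C y t a (group_ctx K Cs \<theta> x (\<Phi> b) b i))
         \<le> 8 * (alpha CARD('d) l s t)^2 / \<Delta>^2 * real CARD('d)
             * ln ((real CARD('d) + real t) / real CARD('d))"
proof -
  let ?d = "CARD('d)"
  define \<alpha> where "\<alpha> = alpha ?d l s t"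
  define T where "T = {\<tau>. 1 \<le> \<tau> \<and> \<tau> < t \<and> A \<tau> = a \<and> C \<tau> \<in> group_ctx K Cs \<theta> x (\<Phi> b) b i \<and>
                         \<tau> \<notin> bad_set K \<theta> x l s A C y t}"
  have T: "\<tau> \<in> pulls A t a" "C \<tau> \<in> best_ctx K Cs \<theta> x b" "\<not> bad_time K \<theta> x l s A C y \<tau>"
    if "\<tau> \<in> T" for \<tau>
    using that by (auto simp: T_def pulls_def group_ctx_def bad_set_def)
  have norms: "\<forall>\<tau>\<in>pulls A t a. norm (x a (C \<tau>)) \<le> l"
    using A1_x ctx ab by (auto simp: pulls_def)
  have N: "Nbar K \<theta> x l s A C y t a (group_ctx K Cs \<theta> x (\<Phi> b) b i) = card T"
    by (simp add: Nbar_def T_def)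
  show ?thesis
  proof (cases "T = {}")
    case True
    have "1 \<le> (real ?d + real t) / real ?d"
      by simp
    then show ?thesis
      using True N by simp
  next
    case False
    then obtain c where c: "c \<in> best_ctx K Cs \<theta> x b"
      using T(2) by blast
    then have "\<Delta> \<le> rew \<theta> x b c - rew \<theta> x a c"
      using A2 ab by auto
    also have "\<dots> \<le> 2 * (l * s)"
      using A1_theta A1_x ab c by (intro rew_gap_le) (auto simp: best_ctx_def)
    finally have l: "l \<noteq> 0" and "\<Delta> \<le> 2 * \<alpha>"
      using A2_pos alpha_ge[of l s ?d t] by (auto simp: \<alpha>_def)
    moreover have "\<Delta> \<le> 2 * \<alpha> * sighat x l A C \<tau> a" if "\<tau> \<in> T" for \<tau>
      unfolding \<alpha>_def
    proof (rule gap_le_width_at_good_time[OF l ab(1,2) T(1,3)[OF that]])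
      show "\<forall>a' \<in> arms K. rhat x l A C y \<tau> a' + alpha ?d l s \<tau> * sighat x l A C \<tau> a'
              \<le> rhat x l A C y \<tau> (A \<tau>) + alpha ?d l s \<tau> * sighat x l A C \<tau> (A \<tau>)"
        using alg T(1)[OF that] unfolding pulls_def by blast
      show "\<Delta> \<le> rew \<theta> x b (C \<tau>) - rew \<theta> x a (C \<tau>)"
        using A2 ab T(2)[OF that] by auto
    qed
    moreover have "T \<subseteq> pulls A t a"
      using T(1) by blast
    ultimately have "card T \<le> 8 * \<alpha>\<^sup>2 / \<Delta>\<^sup>2 * ?d * ln ((real ?d + real t) / real ?d)"
      using card_le_of_width_ge[where x = x and C = C, OF l norms _ A2_pos] by blast
    then show ?thesis
      using N by (simp add: \<alpha>_def)
  qed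
qed

end
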